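(* Let $\Psi$ be a $C^1$ two-time electron–photon wave function on the set $\mathscr{S}$ of space-like configurations satisfying the free multi-time equations $$-i\hbar D_{\mathrm{ph}}\Psi = 0,\qquad -i\hbar D_{\mathrm{el}}\Psi + m_{\mathrm{el}}\Psi = 0\quad\text{in }\mathscr{S},$$ and let $X$ be any constant vector field on $\mathbb{R}^{1,1}$. Then the tensor current $j_X^{\mu\nu}$ is jointly conserved in $\mathscr{S}$: $$\partial_{x_{\mathrm{ph}}^\mu} j_X^{\mu\nu} = 0 \ \ (\nu=0,1),\qquad \partial_{x_{\mathrm{el}}^\nu} j_X^{\mu\nu}=0\ \ (\mu=0,1).$$
   Context: Minkowski space $\mathbb{R}^{1,1}$ has metric $\eta=\mathrm{diag}(1,-1)$; indices are raised/lowered with $\eta$ and repeated indices summed. Let $\gamma^0=\begin{pmatrix}0&1\\1&0\end{pmatrix}$, $\gamma^1=\begin{pmatrix}0&-1\\1&0\end{pmatrix}$, so $\gamma^\mu\gamma^\nu+\gamma^\nu\gamma^\mu=2\eta^{\mu\nu}\mathbb{1}$, and for a vector $X$ put $\gamma(X)=\gamma_\mu X^\mu$. The configuration spacetime is $\mathcal{M}=\mathbb{R}^{1,1}_{\mathrm{ph}}\times\mathbb{R}^{1,1}_{\mathrm{el}}$ with points $(\mathbf{x}_{\mathrm{ph}},\mathbf{x}_{\mathrm{el}})$, and $\mathscr{S}=\{(\mathbf{x}_{\mathrm{ph}},\mathbf{x}_{\mathrm{el}}):\eta(\mathbf{x}_{\mathrm{ph}}-\mathbf{x}_{\mathrm{el}},\mathbf{x}_{\mathrm{ph}}-\mathbf{x}_{\mathrm{el}})<0\}$.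 Let $E_-=\begin{pmatrix}0&1\\0&0\end{pmatrix}$, $E_+=\begin{pmatrix}0&0\\1&0\end{pmatrix}$, $e_-=(1,0)^T$, $e_+=(0,1)^T$. A two-time wave function is $\Psi=\sum_{a,b\in\{-,+\}}\psi_{ab}(\mathbf{x}_{\mathrm{ph}},\mathbf{x}_{\mathrm{el}})\,E_a\otimes e_b$ with complex-valued components $\psi_{ab}$ (first factor: photon, an anti-diagonal $2\times2$ matrix; second factor: electron, a vector in $\mathbb{C}^2$). Set $\gamma^\mu_{\mathrm{ph}}=\gamma^\mu\otimes\mathbb{1}$ (acting on the photon matrix factor by left multiplication), $\gamma^\nu_{\mathrm{el}}=\mathbb{1}\otimes\gamma^\nu$, $D_{\mathrm{ph}}=\gamma^\mu_{\mathrm{ph}}\partial_{x^\mu_{\mathrm{ph}}}$, $D_{\mathrm{el}}=\gamma^\nu_{\mathrm{el}}\partial_{x^\nu_{\mathrm{el}}}$. The Dirac adjoint is $\overline{\Psi}=\sum_{a,b}\overline{\psi_{ab}}\,(\gamma^0E_a^\dagger\gamma^0)\otimes(e_b^\dagger\gamma^0)$. Products are taken factorwise ($(A\otimes r)(B\otimes c)=AB\otimes rc$, with $rc$ a scalar, and right multiplication by $\gamma_{\mathrm{ph}}(X)=\gamma(X)\otimes\mathbb{1}$ acting on the photon matrix factor), $\mathrm{tr}_{\mathrm{ph}}$ is the trace over the photon matrix factor, and $$j_X^{\mu\nu}=\tfrac14\,\mathrm{tr}_{\mathrm{ph}}\{\overline{\Psi}\,\gamma^\mu_{\mathrm{ph}}\gamma^\nu_{\mathrm{el}}\,\Psi\,\gamma_{\mathrm{ph}}(X)\}.$$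 *)

theory Defs
  imports "HOL-Analysis.Analysis"
begin

text \<open>A configuration is a pair (x_ph, x_el). Minkowski indices mu, nu and spinor /
  matrix indices range over the naturals {0,1}; the sign labels - and + of
  E_a, e_b are encoded as 0 and 1 respectively.\<close>

type_synonym mpt = "real \<times> real"
type_synonym config = "mpt \<times> mpt"

definition mcomp :: "mpt \<Rightarrow> nat \<Rightarrow> real" where
  "mcomp x \<mu> = (if \<mu> = 0 then fst x else snd x)"

definition mbasis :: "nat \<Rightarrow> mpt" where
  "mbasis \<mu> = (if \<mu> = 0 then (1, 0) else (0, 1))"

definition eta :: "nat \<Rightarrow> nat \<Rightarrow> real" where
  "eta \<mu> \<nu> = (if \<mu> = \<nu> then (if \<mu> = 0 then 1 else -1) else 0)"

definition mform :: "mpt \<Rightarrow> mpt \<Rightarrow> real" where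
  "mform x y = (\<Sum>\<mu><2. \<Sum>\<nu><2. eta \<mu> \<nu> * mcomp x \<mu> * mcomp y \<nu>)"

definition spacelike :: "config set" where
  "spacelike = {(xph, xel). mform (xph - xel) (xph - xel) < 0}"

definition eph :: "nat \<Rightarrow> config" where "eph \<mu> = (mbasis \<mu>, 0)"
definition eel :: "nat \<Rightarrow> config" where "eel \<nu> = (0, mbasis \<nu>)"

definition pdiff :: "(config \<Rightarrow> complex) \<Rightarrow> config \<Rightarrow> config \<Rightarrow> complex" where
  "pdiff f p v = vector_derivative (\<lambda>t::real. f (p + t *\<^sub>R v)) (at 0)"

definition C1_on :: "config set \<Rightarrow> (config \<Rightarrow> complex) \<Rightarrow> bool" where
  "C1_on S f \<longleftrightarrow> (\<exists>f'. (\<forall>p\<in>S. (f has_derivative f' p) (at p)) \<and>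
                         (\<forall>v. continuous_on S (\<lambda>p. f' p v)))"

text \<open>Gamma matrices gamma^mu (upper index), entries (row, column).\<close>
definition gam :: "nat \<Rightarrow> nat \<Rightarrow> nat \<Rightarrow> complex" where
  "gam \<mu> i j =
     (if \<mu> = 0 then (if (i = 0 \<and> j = 1) \<or> (i = 1 \<and> j = 0) then 1 else 0)
      else (if i = 0 \<and> j = 1 then -1 else if i = 1 \<and> j = 0 then 1 else 0))"

text \<open>gamma(X) = gamma_mu X^mu with gamma_mu = eta_{mu nu} gamma^nu.\<close>
definition gamX :: "mpt \<Rightarrow> nat \<Rightarrow> nat \<Rightarrow> complex" where
  "gamX X i j = (\<Sum>\<mu><2. \<Sum>\<nu><2. complex_of_real (eta \<mu> \<nu> * mcomp X \<mu>) * gam \<nu> i j)"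

text \<open>E_- (a = 0), E_+ (a = 1); e_- (b = 0), e_+ (b = 1).\<close>
definition Emat :: "nat \<Rightarrow> nat \<Rightarrow> nat \<Rightarrow> complex" where
  "Emat a i j = (if a = 0 then (if i = 0 \<and> j = 1 then 1 else 0)
                 else (if i = 1 \<and> j = 0 then 1 else 0))"

definition evec :: "nat \<Rightarrow> nat \<Rightarrow> complex" where
  "evec b k = (if k = b then 1 else 0)"

text \<open>The wave function Psi = sum_{a,b} psi_ab E_a (x) e_b, as a tensor
  Psi[i,j,k] (i,j photon matrix indices, k electron index).\<close>
definition Psi :: "(nat \<Rightarrow> nat \<Rightarrow> config \<Rightarrow> complex) \<Rightarrow> config \<Rightarrow> nat \<Rightarrow> nat \<Rightarrow> nat \<Rightarrow> complex" where
  "Psi \<psi> p i j k = (\<Sum>a<2. \<Sum>b<2. \<psi> a b p * Emat a i j * evec b k)"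

text \<open>Dirac adjoint: sum_{a,b} conj(psi_ab) (gamma^0 E_a^dagger gamma^0) (x) (e_b^dagger gamma^0);
  entry [i,j,k] with (i,j) photon matrix indices, k the electron row-vector index.\<close>
definition Psibar :: "(nat \<Rightarrow> nat \<Rightarrow> config \<Rightarrow> complex) \<Rightarrow> config \<Rightarrow> nat \<Rightarrow> nat \<Rightarrow> nat \<Rightarrow> complex" where
  "Psibar \<psi> p i j k = (\<Sum>a<2. \<Sum>b<2. cnj (\<psi> a b p) *
      (\<Sum>l<2. \<Sum>n<2. gam 0 i l * cnj (Emat a n l) * gam 0 n j) *
      (\<Sum>l<2. cnj (evec b l) * gam 0 l k))"

definition Dph :: "(nat \<Rightarrow> nat \<Rightarrow> config \<Rightarrow> complex) \<Rightarrow> config \<Rightarrow> nat \<Rightarrow> nat \<Rightarrow> nat \<Rightarrow> complex" where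
  "Dph \<psi> p i j k = (\<Sum>\<mu><2. \<Sum>l<2. gam \<mu> i l * pdiff (\<lambda>q. Psi \<psi> q l j k) p (eph \<mu>))"

definition Del :: "(nat \<Rightarrow> nat \<Rightarrow> config \<Rightarrow> complex) \<Rightarrow> config \<Rightarrow> nat \<Rightarrow> nat \<Rightarrow> nat \<Rightarrow> complex" where
  "Del \<psi> p i j k = (\<Sum>\<nu><2. \<Sum>l<2. gam \<nu> k l * pdiff (\<lambda>q. Psi \<psi> q i j l) p (eel \<nu>))"

text \<open>j_X^{mu nu} = 1/4 tr_ph { Psibar gamma^mu_ph gamma^nu_el Psi gamma_ph(X) }.\<close>
definition jX :: "(nat \<Rightarrow> nat \<Rightarrow> config \<Rightarrow> complex) \<Rightarrow> mpt \<Rightarrow> nat \<Rightarrow> nat \<Rightarrow> config \<Rightarrow> complex" where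
  "jX \<psi> X \<mu> \<nu> p = (1/4) *
     (\<Sum>i<2. \<Sum>j<2. \<Sum>l<2. \<Sum>n<2. \<Sum>k<2. \<Sum>k'<2.
        Psibar \<psi> p i j k * gam \<mu> j l * Psi \<psi> p l n k' * gamX X n i * gam \<nu> k k')"

end

theory Submission
  imports Defs
begin

(* In light-cone coordinates the free equations decouple. The photon label a of
   psi_ab selects a null direction n_a (n_- = (1,1), n_+ = (1,-1)) along which psi_ab
   is constant in x_ph, and the derivative of psi_ab along n_b in x_el is
   -i (m/hbar) psi_a(-b), where -b is the opposite electron label. A trace computation
   turns the current into a sum of densities,
     j_X^{mu nu} = 1/4 sum_ab eta(n_a, X) n_a^mu n_b^nu |psi_ab|^2,
   so the photon divergence only involves derivatives of |psi_ab|^2 along n_a, which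
   vanish. In the electron divergence the mass terms coming from psi_a- and psi_a+
   are 2 Re(-i (m/hbar) w) and 2 Re(-i (m/hbar) cnj w) with w = cnj psi_a- * psi_a+,
   which cancel because m/hbar is real. *)

lemma sum_lessThan_2: "(\<Sum>i<(2::nat). f i) = f 0 + f 1"
  by (simp add: numeral_2_eq_2)

lemma pdiff_eq_derivative:
  assumes "(f has_derivative f') (at p)"
  shows "pdiff f p v = f' v"
proof -
  have "((\<lambda>t::real. p + t *\<^sub>R v) has_derivative (\<lambda>t. t *\<^sub>R v)) (at 0)"
    by (auto intro!: derivative_eq_intros)
  with assms have "((\<lambda>t::real. f (p + t *\<^sub>R v)) has_derivative (\<lambda>t. f' (t *\<^sub>R v))) (at 0)"
    using has_derivative_compose[of "\<lambda>t::real. p + t *\<^sub>R v" _ 0 UNIV f] by (simp add: o_def)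
  then have "((\<lambda>t::real. f (p + t *\<^sub>R v)) has_vector_derivative f' v) (at 0)"
    using linear_cmul[OF has_derivative_linear[OF assms]] by (simp add: has_vector_derivative_def)
  then show ?thesis
    unfolding pdiff_def by (rule vector_derivative_at)
qed

lemma has_derivative_pdiff:
  assumes "f differentiable (at p)"
  shows "(f has_derivative pdiff f p) (at p)"
proof -
  from assms obtain f' where f': "(f has_derivative f') (at p)"
    by (auto simp: differentiable_def)
  moreover have "pdiff f p = f'"
    using pdiff_eq_derivative[OF f'] by blast
  ultimately show ?thesis by simp
qed

lemma C1_on_imp_differentiable:
  "C1_on S f \<Longrightarrow> p \<in> S \<Longrightarrow> f differentiable (at p)"
  unfolding C1_on_def differentiable_def by blast

lemma pdiff_sum_directions:
  assumes "f differentiable (at p)"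
  shows "(\<Sum>i\<in>I. complex_of_real (c i) * pdiff f p (e i)) = pdiff f p (\<Sum>i\<in>I. c i *\<^sub>R e i)"
proof -
  interpret linear "pdiff f p"
    using has_derivative_linear[OF has_derivative_pdiff[OF assms]] .
  show ?thesis
    by (simp add: sum scale scaleR_conv_of_real)
qed

lemma photon_direction_expansion: "(w, 0) = (\<Sum>\<mu><2. mcomp w \<mu> *\<^sub>R eph \<mu>)"
  by (simp add: sum_lessThan_2 mcomp_def eph_def mbasis_def)

lemma electron_direction_expansion: "(0, w) = (\<Sum>\<nu><2. mcomp w \<nu> *\<^sub>R eel \<nu>)"
  by (simp add: sum_lessThan_2 mcomp_def eel_def mbasis_def)

definition mod_sq :: "(config \<Rightarrow> complex) \<Rightarrow> config \<Rightarrow> complex" where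
  "mod_sq f q = cnj (f q) * f q"

lemma has_derivative_mod_sq:
  assumes "f differentiable (at p)"
  shows "(mod_sq f has_derivative (\<lambda>v. cnj (pdiff f p v) * f p + cnj (f p) * pdiff f p v)) (at p)"
  unfolding mod_sq_def[abs_def]
  by (auto intro!: derivative_eq_intros bounded_linear.has_derivative[OF bounded_linear_cnj]
      has_derivative_pdiff[OF assms])

lemma differentiable_mod_sq: "f differentiable (at p) \<Longrightarrow> mod_sq f differentiable (at p)"
  using has_derivative_mod_sq differentiable_def by blast

lemma pdiff_mod_sq:
  "f differentiable (at p) \<Longrightarrow> pdiff (mod_sq f) p v = cnj (pdiff f p v) * f p + cnj (f p) * pdiff f p v"
  by (rule pdiff_eq_derivative[OF has_derivative_mod_sq])

lemma pdiff_Psi: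
  assumes "\<And>a b. a < 2 \<Longrightarrow> b < 2 \<Longrightarrow> \<psi> a b differentiable (at p)"
  shows "pdiff (\<lambda>q. Psi \<psi> q i j k) p v = Psi (\<lambda>a b _. pdiff (\<psi> a b) p v) p i j k"
  unfolding Psi_def
  by (rule pdiff_eq_derivative)
    (auto intro!: derivative_eq_intros has_derivative_pdiff assms)

definition nullvec :: "nat \<Rightarrow> mpt" where
  "nullvec a = (1, if a = 0 then 1 else -1)"

lemma jX_eq_sum_mod_sq:
  "jX \<psi> X \<mu> \<nu> p = (1/4) * (\<Sum>a<2. \<Sum>b<2.
     complex_of_real (mform (nullvec a) X * mcomp (nullvec a) \<mu> * mcomp (nullvec b) \<nu>)
       * mod_sq (\<psi> a b) p)"
  by (simp add: jX_def Psi_def Psibar_def gamX_def gam_def Emat_def evec_def eta_def mform_def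
      mcomp_def nullvec_def mod_sq_def sum_lessThan_2 algebra_simps)

lemma pdiff_jX:
  assumes "\<And>a b. a < 2 \<Longrightarrow> b < 2 \<Longrightarrow> \<psi> a b differentiable (at p)"
  shows "pdiff (jX \<psi> X \<mu> \<nu>) p v = (1/4) * (\<Sum>a<2. \<Sum>b<2.
     complex_of_real (mform (nullvec a) X * mcomp (nullvec a) \<mu> * mcomp (nullvec b) \<nu>)
       * pdiff (mod_sq (\<psi> a b)) p v)"
  unfolding jX_eq_sum_mod_sq[abs_def]
  by (intro pdiff_eq_derivative)
    (auto intro!: derivative_eq_intros has_derivative_pdiff differentiable_mod_sq assms)

lemma free_photon_eq_lightcone:
  assumes diff: "\<And>a b. a < 2 \<Longrightarrow> b < 2 \<Longrightarrow> \<psi> a b differentiable (at p)"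
    and Dph: "\<And>i j k. i < 2 \<Longrightarrow> j < 2 \<Longrightarrow> k < 2 \<Longrightarrow> Dph \<psi> p i j k = 0"
    and "a < 2" "b < 2"
  shows "pdiff (\<psi> a b) p (nullvec a, 0) = 0"
proof -
  have "Dph \<psi> p (1 - a) (1 - a) b = 0"
    using Dph \<open>b < 2\<close> by simp
  then have "(\<Sum>\<mu><2. \<Sum>l<2.
      gam \<mu> (1 - a) l * Psi (\<lambda>a b _. pdiff (\<psi> a b) p (eph \<mu>)) p l (1 - a) b) = 0"
    by (simp only: Dph_def pdiff_Psi[OF diff])
  with \<open>a < 2\<close> \<open>b < 2\<close> show ?thesis
    unfolding photon_direction_expansion pdiff_sum_directions[OF diff[OF assms(3,4)], symmetric]
    by (auto simp: less_2_cases_iff sum_lessThan_2 Psi_def Emat_def evec_def gam_def mcomp_def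
        nullvec_def)
qed

lemma dirac_eq_lightcone:
  assumes diff: "\<And>a b. a < 2 \<Longrightarrow> b < 2 \<Longrightarrow> \<psi> a b differentiable (at p)"
    and "hbar \<noteq> 0"
    and Del: "\<And>i j k. i < 2 \<Longrightarrow> j < 2 \<Longrightarrow> k < 2 \<Longrightarrow>
      - \<i> * complex_of_real hbar * Del \<psi> p i j k + complex_of_real m * Psi \<psi> p i j k = 0"
    and "a < 2" "b < 2"
  shows "pdiff (\<psi> a b) p (0, nullvec b) = - \<i> * complex_of_real (m / hbar) * \<psi> a (1 - b) p"
proof -
  have "- \<i> * complex_of_real hbar * Del \<psi> p a (1 - a) (1 - b)
      + complex_of_real m * Psi \<psi> p a (1 - a) (1 - b) = 0"
    using Del \<open>a < 2\<close> by simp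
  then have "Del \<psi> p a (1 - a) (1 - b)
      = - \<i> * complex_of_real (m / hbar) * Psi \<psi> p a (1 - a) (1 - b)"
    using \<open>hbar \<noteq> 0\<close> by (simp add: field_simps)
  then have "(\<Sum>\<nu><2. \<Sum>l<2.
        gam \<nu> (1 - b) l * Psi (\<lambda>a b _. pdiff (\<psi> a b) p (eel \<nu>)) p a (1 - a) l)
      = - \<i> * complex_of_real (m / hbar) * Psi \<psi> p a (1 - a) (1 - b)"
    by (simp only: Del_def pdiff_Psi[OF diff])
  with \<open>a < 2\<close> \<open>b < 2\<close> show ?thesis
    unfolding electron_direction_expansion pdiff_sum_directions[OF diff[OF assms(4,5)], symmetric]
    by (auto simp: less_2_cases_iff sum_lessThan_2 Psi_def Emat_def evec_def gam_def mcomp_def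
        nullvec_def algebra_simps eq_neg_iff_add_eq_0)
qed

lemma jX_photon_divergence_free:
  assumes diff: "\<And>a b. a < 2 \<Longrightarrow> b < 2 \<Longrightarrow> \<psi> a b differentiable (at p)"
    and null: "\<And>a b. a < 2 \<Longrightarrow> b < 2 \<Longrightarrow> pdiff (\<psi> a b) p (nullvec a, 0) = 0"
  shows "(\<Sum>\<mu><2. pdiff (jX \<psi> X \<mu> \<nu>) p (eph \<mu>)) = 0"
proof -
  have "(\<Sum>\<mu><2. pdiff (jX \<psi> X \<mu> \<nu>) p (eph \<mu>)) = (1/4) * (\<Sum>a<2. \<Sum>b<2.
      complex_of_real (mform (nullvec a) X * mcomp (nullvec b) \<nu>) *
      (\<Sum>\<mu><2. complex_of_real (mcomp (nullvec a) \<mu>) * pdiff (mod_sq (\<psi> a b)) p (eph \<mu>)))"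
    by (simp add: pdiff_jX[OF diff] sum_lessThan_2 algebra_simps)
  also have "\<dots> = (1/4) * (\<Sum>a<2. \<Sum>b<2.
      complex_of_real (mform (nullvec a) X * mcomp (nullvec b) \<nu>)
        * pdiff (mod_sq (\<psi> a b)) p (nullvec a, 0))"
    by (simp add: pdiff_sum_directions differentiable_mod_sq diff photon_direction_expansion)
  also have "\<dots> = 0"
    by (simp add: pdiff_mod_sq diff null)
  finally show ?thesis .
qed

lemma jX_electron_divergence_free:
  assumes diff: "\<And>a b. a < 2 \<Longrightarrow> b < 2 \<Longrightarrow> \<psi> a b differentiable (at p)"
    and dirac: "\<And>a b. a < 2 \<Longrightarrow> b < 2 \<Longrightarrow>
      pdiff (\<psi> a b) p (0, nullvec b) = - \<i> * complex_of_real \<kappa> * \<psi> a (1 - b) p"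
  shows "(\<Sum>\<nu><2. pdiff (jX \<psi> X \<mu> \<nu>) p (eel \<nu>)) = 0"
proof -
  have "(\<Sum>\<nu><2. pdiff (jX \<psi> X \<mu> \<nu>) p (eel \<nu>)) = (1/4) * (\<Sum>a<2.
      complex_of_real (mform (nullvec a) X * mcomp (nullvec a) \<mu>) * (\<Sum>b<2.
      (\<Sum>\<nu><2. complex_of_real (mcomp (nullvec b) \<nu>) * pdiff (mod_sq (\<psi> a b)) p (eel \<nu>))))"
    by (simp add: pdiff_jX[OF diff] sum_lessThan_2 algebra_simps)
  also have "\<dots> = (1/4) * (\<Sum>a<2.
      complex_of_real (mform (nullvec a) X * mcomp (nullvec a) \<mu>) *
      (\<Sum>b<2. pdiff (mod_sq (\<psi> a b)) p (0, nullvec b)))"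
    by (simp add: pdiff_sum_directions differentiable_mod_sq diff electron_direction_expansion)
  also have "\<dots> = 0"
    by (simp add: pdiff_mod_sq diff dirac sum_lessThan_2 algebra_simps)
  finally show ?thesis .
qed

theorem proposition1:
  fixes \<psi> :: "nat \<Rightarrow> nat \<Rightarrow> config \<Rightarrow> complex"
    and hbar m :: real
    and X :: mpt
  assumes hbar: "hbar > 0"
    and C1: "\<And>a b. a < 2 \<Longrightarrow> b < 2 \<Longrightarrow> C1_on spacelike (\<psi> a b)"
    and eq_ph: "\<And>p i j k. p \<in> spacelike \<Longrightarrow> i < 2 \<Longrightarrow> j < 2 \<Longrightarrow> k < 2 \<Longrightarrow>
                  - \<i> * complex_of_real hbar * Dph \<psi> p i j k = 0"
    and eq_el: "\<And>p i j k. p \<in> spacelike \<Longrightarrow> i < 2 \<Longrightarrow> j < 2 \<Longrightarrow> k < 2 \<Longrightarrow>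
                  - \<i> * complex_of_real hbar * Del \<psi> p i j k
                  + complex_of_real m * Psi \<psi> p i j k = 0"
  shows "\<forall>p\<in>spacelike.
           (\<forall>\<nu><2. (\<Sum>\<mu><2. pdiff (jX \<psi> X \<mu> \<nu>) p (eph \<mu>)) = 0) \<and>
           (\<forall>\<mu><2. (\<Sum>\<nu><2. pdiff (jX \<psi> X \<mu> \<nu>) p (eel \<nu>)) = 0)"
proof
  fix p assume p: "p \<in> spacelike"
  have diff: "\<psi> a b differentiable (at p)" if "a < 2" "b < 2" for a b
    using C1[OF that] p by (rule C1_on_imp_differentiable)
  have free: "Dph \<psi> p i j k = 0" if "i < 2" "j < 2" "k < 2" for i j k
    using eq_ph[OF p that] hbar by simp
  have photon: "pdiff (\<psi> a b) p (nullvec a, 0) = 0" if "a < 2" "b < 2" for a b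
    using free_photon_eq_lightcone[of \<psi> p, OF diff free that] .
  have electron:
    "pdiff (\<psi> a b) p (0, nullvec b) = - \<i> * complex_of_real (m / hbar) * \<psi> a (1 - b) p"
    if "a < 2" "b < 2" for a b
    using dirac_eq_lightcone[of \<psi> p, OF diff _ eq_el[OF p] that] hbar by simp
  show "(\<forall>\<nu><2. (\<Sum>\<mu><2. pdiff (jX \<psi> X \<mu> \<nu>) p (eph \<mu>)) = 0) \<and>
        (\<forall>\<mu><2. (\<Sum>\<nu><2. pdiff (jX \<psi> X \<mu> \<nu>) p (eel \<nu>)) = 0)"
    using jX_photon_divergence_free[of \<psi> p, OF diff photon]
      jX_electron_divergence_free[of \<psi> p, OF diff electron] by blast
qed

end
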